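(* Let $A$ and $B$ be two distinct points of the Euclidean plane and let $C$ be a further point. Let $c$ be the union of the ellipse and the hyperbola, both defined with foci $A$, $B$ and circumpoint $C$, i.e. $c=\{P : AP+PB=AC+CB\}\cup\{P : |AP-PB|=|AC-CB|\}$. Let $a$ denote the line $AB$ and let $b$ be the perpendicular bisector of the segment $AB$. Let $C'$ be the reflection of $C$ in the line $a$ and $C''$ the reflection of $C$ in the line $b$. Let $D$ be an arbitrary point of $c$, and let $D'$ and $D''$ be the reflections of $D$ in $a$ and in $b$, respectively. Then the intersection point of the lines $CD$ and $C''D''$, the intersection point of the lines $CD'$ and $C'C''$, and the intersection point of the lines $C'D$ and $D'D''$ are collinear.
   Context: $XY$ denotes the Euclidean distance between points $X$ and $Y$. The ellipse with foci $A,B$ and circumpoint $C$ is the set of points $P$ with $AP+PB=AC+CB$; the hyperbola with foci $A,B$ and circumpoint $C$ is the set of points $P$ with $|AP-PB|=|AC-CB|$. *)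

theory Defs
  imports "HOL-Analysis.Analysis"
begin

definition line_thru :: "real^2 \<Rightarrow> real^2 \<Rightarrow> (real^2) set" where
  "line_thru P Q = affine hull {P, Q}"

definition rot90 :: "real^2 \<Rightarrow> real^2" where
  "rot90 u = vector [- (u$2), u$1]"

text \<open>Reflection of X in the line through P with nonzero direction v.\<close>
definition reflect_line :: "real^2 \<Rightarrow> real^2 \<Rightarrow> real^2 \<Rightarrow> real^2" where
  "reflect_line P v X = 2 *\<^sub>R (P + (((X - P) \<bullet> v) / (v \<bullet> v)) *\<^sub>R v) - X"

definition reflect_a :: "real^2 \<Rightarrow> real^2 \<Rightarrow> real^2 \<Rightarrow> real^2" where
  "reflect_a A B X = reflect_line A (B - A) X"

definition reflect_b :: "real^2 \<Rightarrow> real^2 \<Rightarrow> real^2 \<Rightarrow> real^2" where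
  "reflect_b A B X = reflect_line (midpoint A B) (rot90 (B - A)) X"

definition conic_union :: "real^2 \<Rightarrow> real^2 \<Rightarrow> real^2 \<Rightarrow> (real^2) set" where
  "conic_union A B C =
     {P. dist A P + dist P B = dist A C + dist C B}
     \<union> {P. \<bar>dist A P - dist P B\<bar> = \<bar>dist A C - dist C B\<bar>}"

text \<open>X is "the intersection point" of lines PQ and RS: both lines are well defined,
  they are different lines, and X lies on both (hence X is their unique common point).\<close>
definition is_intersection :: "real^2 \<Rightarrow> real^2 \<Rightarrow> real^2 \<Rightarrow> real^2 \<Rightarrow> real^2 \<Rightarrow> bool" where
  "is_intersection X P Q R S \<longleftrightarrow>
     P \<noteq> Q \<and> R \<noteq> S \<and> line_thru P Q \<noteq> line_thru R S \<and>
     X \<in> line_thru P Q \<and> X \<in> line_thru R S"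

end

theory Submission
  imports Defs
begin

text \<open>Take coordinates with origin the midpoint of AB and axes along AB and its normal.
  Then the reflections in a and b just negate one coordinate, and with C = (p, q),
  D = (r, s) the three intersection points are explicit: X lies on b by symmetry,
  Y on the line C'C'' and Z on the line D'D'', both through the origin. Collinearity
  becomes a polynomial identity, valid whenever the determinants expressing that the
  paired lines are not parallel are nonzero.\<close>

definition det2 :: "real^2 \<Rightarrow> real^2 \<Rightarrow> real" where
  "det2 u w = u$1 * w$2 - u$2 * w$1"

lemma det2_eq_0_imp_parallel:
  fixes u w :: "real^2"
  assumes "u \<noteq> 0" and "det2 w u = 0"
  shows "\<exists>k. w = k *\<^sub>R u"
proof
  have uu: "u$1 * u$1 + u$2 * u$2 \<noteq> 0"
    using assms(1) inner_eq_zero_iff[of u] by (simp add: inner_vec_def sum_2)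
  have "w$1 * u$2 = w$2 * u$1"
    using assms(2) by (simp add: det2_def)
  with uu show "w = ((w$1 * u$1 + w$2 * u$2) / (u$1 * u$1 + u$2 * u$2)) *\<^sub>R u"
    by (simp add: vec_eq_iff forall_2 field_simps)
qed

lemma line_thru_eq_det2:
  assumes "P \<noteq> Q"
  shows "line_thru P Q = {X. det2 (X - P) (Q - P) = 0}"
proof -
  have "X \<in> line_thru P Q \<longleftrightarrow> det2 (X - P) (Q - P) = 0" for X
  proof
    assume "X \<in> line_thru P Q"
    then obtain t where "X = P + t *\<^sub>R (Q - P)"
      unfolding line_thru_def affine_hull_2_alt by blast
    then show "det2 (X - P) (Q - P) = 0"
      by (simp add: det2_def)
  next
    assume "det2 (X - P) (Q - P) = 0"
    then obtain t where "X - P = t *\<^sub>R (Q - P)"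
      using det2_eq_0_imp_parallel assms by fastforce
    then show "X \<in> line_thru P Q"
      unfolding line_thru_def affine_hull_2_alt by (auto simp: algebra_simps)
  qed
  then show ?thesis by auto
qed

lemma collinear_if_det2_eq_0:
  assumes "det2 (X - Y) (Z - Y) = 0"
  shows "collinear {X, Y, Z}"
proof (cases "X = Y")
  case False
  have "det2 (Z - Y) (X - Y) = 0"
    using assms by (simp add: det2_def algebra_simps)
  then have "collinear {0, X - Y, Z - Y}"
    using det2_eq_0_imp_parallel[of "X - Y"] False by (auto simp: collinear_lemma)
  then show ?thesis by (simp add: collinear_3)
qed simp

definition crossing_point :: "real^2 \<Rightarrow> real^2 \<Rightarrow> real^2 \<Rightarrow> real^2 \<Rightarrow> real^2 \<Rightarrow> bool" where
  "crossing_point X P Q R S \<longleftrightarrow>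
     det2 (Q - P) (S - R) \<noteq> 0 \<and> det2 (X - P) (Q - P) = 0 \<and> det2 (X - R) (S - R) = 0"

lemma is_intersection_imp_crossing_point:
  assumes "is_intersection X P Q R S"
  shows "crossing_point X P Q R S"
proof -
  have PQ: "P \<noteq> Q" and RS: "R \<noteq> S" and lines: "line_thru P Q \<noteq> line_thru R S"
    and X: "X \<in> line_thru P Q" "X \<in> line_thru R S"
    using assms by (auto simp: is_intersection_def)
  have "det2 (Q - P) (S - R) \<noteq> 0"
  proof
    assume "det2 (Q - P) (S - R) = 0"
    then have "det2 (S - R) (Q - P) = 0"
      by (simp add: det2_def algebra_simps)
    then obtain k where k: "S - R = k *\<^sub>R (Q - P)"
      using det2_eq_0_imp_parallel PQ by fastforce
    with RS have "k \<noteq> 0" by auto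
    have "det2 (X - P) (Q - P) = 0" "det2 (X - R) (Q - P) = 0"
      using X k \<open>k \<noteq> 0\<close> by (auto simp: line_thru_eq_det2 PQ RS det2_def)
    then have "det2 (Y - R) (S - R) = k * det2 (Y - P) (Q - P)" for Y
      unfolding k by (simp add: det2_def algebra_simps) algebra
    then have "line_thru P Q = line_thru R S"
      using \<open>k \<noteq> 0\<close> by (simp add: line_thru_eq_det2 PQ RS)
    with lines show False ..
  qed
  with X show ?thesis
    by (simp add: crossing_point_def line_thru_eq_det2 PQ RS)
qed

lemma inner_reflect_line_along:
  assumes "v \<noteq> 0"
  shows "(reflect_line P v X - P) \<bullet> v = (X - P) \<bullet> v"
  using assms by (simp add: reflect_line_def inner_diff_left inner_add_left field_simps)

lemma inner_reflect_line_orthogonal: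
  assumes "v \<bullet> w = 0"
  shows "(reflect_line P v X - P) \<bullet> w = - ((X - P) \<bullet> w)"
  using assms by (simp add: reflect_line_def inner_diff_left inner_add_left algebra_simps)

lemma inner_rot90_self [simp]: "u \<bullet> rot90 u = 0"
  by (simp add: rot90_def inner_vec_def sum_2)

lemma rot90_eq_0_iff [simp]: "rot90 u = 0 \<longleftrightarrow> u = 0"
  by (auto simp: rot90_def vec_eq_iff forall_2)

definition frame_coords :: "real^2 \<Rightarrow> real^2 \<Rightarrow> real^2 \<Rightarrow> real^2" where
  "frame_coords A B P =
     vector [(P - midpoint A B) \<bullet> (B - A), (P - midpoint A B) \<bullet> rot90 (B - A)]"

definition negate_x :: "real^2 \<Rightarrow> real^2" where
  "negate_x v = vector [- v$1, v$2]"

definition negate_y :: "real^2 \<Rightarrow> real^2" where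
  "negate_y v = vector [v$1, - v$2]"

lemma frame_coords_reflect_a:
  assumes "A \<noteq> B"
  shows "frame_coords A B (reflect_a A B X) = negate_y (frame_coords A B X)"
proof -
  let ?R = "reflect_line A (B - A) X"
  have shift: "Y - midpoint A B = (Y - A) - (1/2) *\<^sub>R (B - A)" for Y
    by (simp add: midpoint_def vec_eq_iff field_simps)
  have "(?R - A) \<bullet> (B - A) = (X - A) \<bullet> (B - A)"
    using assms by (simp add: inner_reflect_line_along)
  moreover have "(?R - A) \<bullet> rot90 (B - A) = - ((X - A) \<bullet> rot90 (B - A))"
    by (simp add: inner_reflect_line_orthogonal)
  ultimately show ?thesis
    unfolding frame_coords_def negate_y_def reflect_a_def shift[of ?R] shift[of X]
    by (simp add: inner_diff_left inner_commute[of "B - A"])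
qed

lemma frame_coords_reflect_b:
  assumes "A \<noteq> B"
  shows "frame_coords A B (reflect_b A B X) = negate_x (frame_coords A B X)"
  using assms
  by (simp add: frame_coords_def negate_x_def reflect_b_def
      inner_reflect_line_along inner_reflect_line_orthogonal inner_commute[of "rot90 (B - A)"])

lemma det2_frame_coords:
  "det2 (frame_coords A B P - frame_coords A B Q) (frame_coords A B R - frame_coords A B S)
     = ((B - A) \<bullet> (B - A)) * det2 (P - Q) (R - S)"
  by (simp add: frame_coords_def det2_def rot90_def midpoint_def inner_vec_def sum_2) algebra

lemma crossing_point_frame_coords:
  assumes "A \<noteq> B" and "crossing_point X P Q R S"
  shows "crossing_point (frame_coords A B X) (frame_coords A B P) (frame_coords A B Q)
           (frame_coords A B R) (frame_coords A B S)"
  using assms by (simp add: crossing_point_def det2_frame_coords)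

lemma crossing_points_collinear_symmetric_frame:
  fixes c d x y z :: "real^2"
  assumes "crossing_point x c d (negate_x c) (negate_x d)"
    and "crossing_point y c (negate_y d) (negate_y c) (negate_x c)"
    and "crossing_point z (negate_y c) d (negate_y d) (negate_x d)"
  shows "det2 (x - y) (z - y) = 0"
proof -
  obtain p q r s where cd: "c = vector [p, q]" "d = vector [r, s]"
    using forall_vector_2[of "\<lambda>v. v \<noteq> c"] forall_vector_2[of "\<lambda>v. v \<noteq> d"] by blast
  note unfold = crossing_point_def det2_def negate_x_def negate_y_def cd
  have nz: "(s - q) * (r - p) \<noteq> 0" "q * r - p * s - 2 * p * q \<noteq> 0" "2 * r * s - p * s + q * r \<noteq> 0"
    using assms unfolding unfold by (auto simp: algebra_simps)
  have "(x$1 - p) * (s - q) - (x$2 - q) * (r - p) = 0" "(x$1 + p) * (s - q) + (x$2 - q) * (r - p) = 0"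
    "(y$1 - p) * (- s - q) - (y$2 - q) * (r - p) = 0" "q * y$1 + p * y$2 = 0"
    "(z$1 - p) * (s + q) - (z$2 + q) * (r - p) = 0" "s * z$1 + r * z$2 = 0"
    using assms unfolding unfold by (auto simp: algebra_simps)
  then have "((s - q) * (r - p)) * (q * r - p * s - 2 * p * q) * (2 * r * s - p * s + q * r)
      * ((x$1 - y$1) * (z$2 - y$2) - (x$2 - y$2) * (z$1 - y$1)) = 0"
    by algebra
  with nz show ?thesis
    by (simp add: det2_def)
qed

theorem mainTheorem1:
  fixes A B C D X Y Z :: "real^2"
  assumes "A \<noteq> B"
    and "D \<in> conic_union A B C"
    and "is_intersection X C D (reflect_b A B C) (reflect_b A B D)"
    and "is_intersection Y C (reflect_a A B D) (reflect_a A B C) (reflect_b A B C)"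
    and "is_intersection Z (reflect_a A B C) D (reflect_a A B D) (reflect_b A B D)"
  shows "collinear {X, Y, Z}"
proof -
  let ?T = "frame_coords A B"
  note transfer = crossing_point_frame_coords[OF \<open>A \<noteq> B\<close> is_intersection_imp_crossing_point]
    frame_coords_reflect_a[OF \<open>A \<noteq> B\<close>] frame_coords_reflect_b[OF \<open>A \<noteq> B\<close>]
  have "det2 (?T X - ?T Y) (?T Z - ?T Y) = 0"
    using assms(3-5)[THEN transfer(1)] unfolding transfer(2,3)
    by (rule crossing_points_collinear_symmetric_frame)
  then have "det2 (X - Y) (Z - Y) = 0"
    using \<open>A \<noteq> B\<close> by (simp add: det2_frame_coords)
  then show ?thesis
    by (rule collinear_if_det2_eq_0)
qed

end
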